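(* Let $L=(\ell_1,\dots,\ell_n)$, $K=(k_1,\dots,k_n)\in\mathbb{R}^n$ with $0<k_i<\ell_i$ for all $i$, and let $X=(x_1,\dots,x_n)\in\mathbb{R}^n$. Then $\mathcal{S}_{L,K}\cap(X+\mathcal{S}_{L,K})\neq\varnothing$ if and only if $|x_i|<\ell_i$ for all $1\le i\le n$ and there exist indices $j,r\in\{1,\dots,n\}$ such that $x_j<\ell_j-k_j$ and $-(\ell_r-k_r)<x_r$.
   Context: $\mathcal{S}_{L,K}=\{(y_1,\dots,y_n)\in\mathbb{R}^n: 0\le y_i<\ell_i \text{ for all } i, \text{ and there exists } j \text{ with } y_j<\ell_j-k_j\}$, and $X+\mathcal{S}_{L,K}=\{X+Y: Y\in\mathcal{S}_{L,K}\}$. *)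

theory Defs
  imports "HOL-Analysis.Analysis"
begin

definition S_LK :: "real^'n \<Rightarrow> real^'n \<Rightarrow> (real^'n) set" where
  "S_LK L K = {Y. (\<forall>i. 0 \<le> Y $ i \<and> Y $ i < L $ i) \<and> (\<exists>j. Y $ j < L $ j - K $ j)}"

definition translate :: "real^'n \<Rightarrow> (real^'n) set \<Rightarrow> (real^'n) set" where
  "translate X S = {X + Y | Y. Y \<in> S}"

end

theory Submission
  imports Defs
begin

text \<open>If Z and X + Z both lie in S_{L,K}, each coordinate of X is a difference of two numbers
  in [0, l_i), and the defect coordinates of X + Z and of Z give j and r. Conversely, the negative
  part Z = max 0 (-X) of X is a common witness: Z and X + Z = max X 0 are nonnegative and
  inherit their bounds from |x_i| < l_i, x_j < l_j - k_j and -(l_r - k_r) < x_r.\<close>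

lemma mem_S_LK_iff:
  "Y \<in> S_LK L K \<longleftrightarrow> (\<forall>i. 0 \<le> Y $ i \<and> Y $ i < L $ i) \<and> (\<exists>j. Y $ j < L $ j - K $ j)"
  unfolding S_LK_def by simp

lemma inter_translate_nonempty_iff:
  "S \<inter> translate X S \<noteq> {} \<longleftrightarrow> (\<exists>Z\<in>S. X + Z \<in> S)"
  unfolding translate_def by blast

lemma S_LK_translate_pair_bounds:
  assumes "Z \<in> S_LK L K" and "X + Z \<in> S_LK L K"
  shows "(\<forall>i. \<bar>X $ i\<bar> < L $ i) \<and> (\<exists>j r. X $ j < L $ j - K $ j \<and> - (L $ r - K $ r) < X $ r)"
proof -
  from assms(1) obtain r where r: "Z $ r < L $ r - K $ r"
    and Z: "\<And>i. 0 \<le> Z $ i \<and> Z $ i < L $ i"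
    by (auto simp: mem_S_LK_iff)
  from assms(2) obtain j where j: "X $ j + Z $ j < L $ j - K $ j"
    and XZ: "\<And>i. 0 \<le> X $ i + Z $ i \<and> X $ i + Z $ i < L $ i"
    by (auto simp: mem_S_LK_iff)
  have "\<bar>X $ i\<bar> < L $ i" for i
    using Z[of i] XZ[of i] by linarith
  moreover have "X $ j < L $ j - K $ j"
    using j Z[of j] by linarith
  moreover have "- (L $ r - K $ r) < X $ r"
    using r XZ[of r] by linarith
  ultimately show ?thesis by blast
qed

lemma negative_part_in_S_LK:
  assumes "\<forall>i. K $ i < L $ i" and "\<forall>i. \<bar>X $ i\<bar> < L $ i" and "- (L $ r - K $ r) < X $ r"
  shows "(\<chi> i. max 0 (- X $ i)) \<in> S_LK L K"
proof -
  have "0 < L $ i" for i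
    using assms(2) abs_ge_zero[of "X $ i"] by (metis order.strict_trans1)
  then show ?thesis
    unfolding mem_S_LK_iff using assms by (auto intro!: exI[of _ r] simp: abs_less_iff)
qed

lemma translate_negative_part_in_S_LK:
  assumes "\<forall>i. K $ i < L $ i" and "\<forall>i. \<bar>X $ i\<bar> < L $ i" and "X $ j < L $ j - K $ j"
  shows "X + (\<chi> i. max 0 (- X $ i)) \<in> S_LK L K"
proof -
  have "X + (\<chi> i. max 0 (- X $ i)) = (\<chi> i. max (X $ i) 0)"
    by (simp add: vec_eq_iff max_def)
  moreover have "0 < L $ i" for i
    using assms(2) abs_ge_zero[of "X $ i"] by (metis order.strict_trans1)
  ultimately show ?thesis
    unfolding mem_S_LK_iff using assms by (auto intro!: exI[of _ j] simp: abs_less_iff)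
qed

theorem mainTheorem12:
  fixes L K X :: "real^'n"
  assumes "\<forall>i. 0 < K $ i \<and> K $ i < L $ i"
  shows "S_LK L K \<inter> translate X (S_LK L K) \<noteq> {} \<longleftrightarrow>
           ((\<forall>i. \<bar>X $ i\<bar> < L $ i) \<and>
            (\<exists>j r. X $ j < L $ j - K $ j \<and> - (L $ r - K $ r) < X $ r))"
proof
  assume "S_LK L K \<inter> translate X (S_LK L K) \<noteq> {}"
  then show "(\<forall>i. \<bar>X $ i\<bar> < L $ i) \<and> (\<exists>j r. X $ j < L $ j - K $ j \<and> - (L $ r - K $ r) < X $ r)"
    unfolding inter_translate_nonempty_iff using S_LK_translate_pair_bounds by blast
next
  assume "(\<forall>i. \<bar>X $ i\<bar> < L $ i) \<and> (\<exists>j r. X $ j < L $ j - K $ j \<and> - (L $ r - K $ r) < X $ r)"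
  then obtain j r where "\<forall>i. \<bar>X $ i\<bar> < L $ i"
    and "X $ j < L $ j - K $ j" and "- (L $ r - K $ r) < X $ r"
    by blast
  moreover have "\<forall>i. K $ i < L $ i" using assms by blast
  ultimately show "S_LK L K \<inter> translate X (S_LK L K) \<noteq> {}"
    unfolding inter_translate_nonempty_iff
    using negative_part_in_S_LK translate_negative_part_in_S_LK by blast
qed

end
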